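(* The dendriform coalgebra $(\mathcal{A},\Delta_\leftarrow,\Delta_\rightarrow)$ is connected: for every $a\in\mathcal{A}^+$ there exists $n_a\in\mathbb{N}$ such that $P(a)=0$ for all $P\in\mathcal{P}(n_a)$.
   Context: Trees: planar rooted trees in which every internal vertex has at least two children; the root vertex hangs from a trunk edge; leaves are edges without upper vertex; $|$ is the one-leaf tree; $T_n$ = trees with $n+1$ leaves, $\mathcal A_n=\mathbb K T_n$, $\mathcal A=\bigoplus_n\mathcal A_n$, $\mathcal A^+=\bigoplus_{n\ge1}\mathcal A_n$, with the product $*$ of the Loday–Ronco free tridendriform algebra ($x_0\vee\cdots\vee x_k$ grafts trees on a new root; for $x=x^{(0)}\vee\cdots\vee x^{(k)}$, $y=y^{(0)}\vee\cdots\vee y^{(l)}$: $x\prec y=x^{(0)}\vee\cdots\vee x^{(k-1)}\vee(x^{(k)}*y)$, $x\cdot y=x^{(0)}\vee\cdots\vee x^{(k-1)}\vee(x^{(k)}*y^{(0)})\vee y^{(1)}\vee\cdots\vee y^{(l)}$, $x\succ y=(x*y^{(0)})\vee y^{(1)}\vee\cdots\vee y^{(l)}$, $*=\prec+\cdot+\succ$, $|*z=z*|=z$). Admissible cuts: internal edges join two internal vertices; a cut is a nonempty set of internal edges, plus the empty and total (below the root) cuts; admissible if every root-to-leaf path meets at most one chosen edge; $P^c(t)$ is the component containing the root, $G^c(t)=G^c_1(t)*\cdots*G^c_m(t)$ the product of the cut-off trees from left to right (empty cut: $P^c=t,G^c=|$; total cut: $P^c=|,G^c=t$). For $t\ne|$: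 $\Delta_\leftarrow(t)$ is the sum of $G^c(t)\otimes P^c(t)$ over admissible cuts with the right-most leaf of $t$ not in $P^c(t)$, $\Delta_\rightarrow(t)$ the sum over the others; the reduced maps are $\tilde\Delta_\leftarrow(t)=\Delta_\leftarrow(t)-t\otimes|$, $\tilde\Delta_\rightarrow(t)=\Delta_\rightarrow(t)-|\otimes t$, maps $\mathcal A^+\to\mathcal A^+\otimes\mathcal A^+$. $\mathcal P(0)=\{\mathrm{Id}\}$, $\mathcal P(1)=\{\tilde\Delta_\leftarrow,\tilde\Delta_\rightarrow\}$, and $\mathcal P(n)$ is the set of maps $(\mathrm{Id}^{\otimes(i-1)}\otimes D\otimes\mathrm{Id}^{\otimes(n-i)})\circ P$ with $P\in\mathcal P(n-1)$, $i\in\{1,\dots,n\}$, $D\in\{\tilde\Delta_\leftarrow,\tilde\Delta_\rightarrow\}$. *)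

theory Defs
  imports Main "HOL-Library.Multiset"
begin

text \<open>A tree is a root vertex (hanging from the trunk edge) with an ordered list of
  subtrees; Node [] is the one-leaf tree (a bare edge, no upper vertex).\<close>
datatype tree = Node "tree list"

abbreviation leaf :: tree where "leaf \<equiv> Node []"

fun wf_tree :: "tree \<Rightarrow> bool" where
  "wf_tree (Node ts) = (ts = [] \<or> (2 \<le> length ts \<and> (\<forall>c\<in>set ts. wf_tree c)))"

lemma size_mem_tree: "t \<in> set ts \<Longrightarrow> size t < size (Node ts)"
  by (induct ts) auto

lemma size_last_le: "xs \<noteq> [] \<Longrightarrow> size (last xs) \<le> size_list size xs"
  by (induct xs) auto

section \<open>Tridendriform product (linear combinations with natural multiplicities)\<close>

function star :: "tree \<Rightarrow> tree \<Rightarrow> tree multiset" where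
  "star (Node []) y = {#y#}"
| "star (Node (x#xs)) (Node []) = {#Node (x#xs)#}"
| "star (Node (x#xs)) (Node (y#ys)) =
     image_mset (\<lambda>w. Node (butlast (x#xs) @ [w])) (star (last (x#xs)) (Node (y#ys)))
   + image_mset (\<lambda>w. Node (butlast (x#xs) @ [w] @ ys)) (star (last (x#xs)) y)
   + image_mset (\<lambda>w. Node (w # ys)) (star (Node (x#xs)) y)"
  by pat_completeness auto
termination
  by (relation "measure (\<lambda>(a,b). size a + size b)")
     (auto dest: size_last_le)

fun prodL :: "tree list \<Rightarrow> tree multiset" where
  "prodL [] = {#leaf#}"
| "prodL (g#gs) = \<Sum>\<^sub># (image_mset (star g) (prodL gs))"

text \<open>cutsNT t lists the admissible cuts of t that do not cut the trunk (including the
  empty cut): each entry is (P^c(t), list of cut-off trees from left to right, flag), the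
  flag being True iff the right-most leaf of t is not in P^c(t).  At each child of the
  root either the child is a leaf, or the internal edge to the child is cut (the cut
  edge remains a leaf of P^c), or it is not cut and we recurse.\<close>
fun cutsNT :: "tree \<Rightarrow> (tree \<times> tree list \<times> bool) list" where
  "cutsNT (Node ts) =
     map (\<lambda>cs. (Node (map fst cs), concat (map (fst \<circ> snd) cs),
                (case rev cs of [] \<Rightarrow> False | c # _ \<Rightarrow> snd (snd c))))
       (product_lists (map (\<lambda>c. (if c = leaf then [] else [(leaf, [c], True)]) @ cutsNT c) ts))"

definition cuts :: "tree \<Rightarrow> (tree \<times> tree list \<times> bool) list" where
  "cuts t = (leaf, [t], True) # cutsNT t"

definition Delta_left :: "tree \<Rightarrow> (tree \<times> tree) multiset" where
  "Delta_left t = sum_list (map (\<lambda>(p, gs, f). if f then image_mset (\<lambda>g. (g, p)) (prodL gs) else {#})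
                              (cuts t))"

definition Delta_right :: "tree \<Rightarrow> (tree \<times> tree) multiset" where
  "Delta_right t = sum_list (map (\<lambda>(p, gs, f). if f then {#} else image_mset (\<lambda>g. (g, p)) (prodL gs))
                              (cuts t))"

text \<open>Reduced coproducts (only applied to trees different from the leaf).\<close>
definition rDelta_left :: "tree \<Rightarrow> (tree \<times> tree) multiset" where
  "rDelta_left t = Delta_left t - {#(t, leaf)#}"

definition rDelta_right :: "tree \<Rightarrow> (tree \<times> tree) multiset" where
  "rDelta_right t = Delta_right t - {#(leaf, t)#}"

text \<open>A map A^+ \<rightarrow> (A^+)^{\<otimes>(n+1)} is given on basis trees by a multiset of tensors
  (lists of length n+1).  applyAt i D applies D to the (i+1)-th tensor factor (0-based i).\<close>
definition applyAt :: "nat \<Rightarrow> (tree \<Rightarrow> (tree \<times> tree) multiset) \<Rightarrow> tree list \<Rightarrow> tree list multiset" where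
  "applyAt i D ts = image_mset (\<lambda>(a, b). take i ts @ [a, b] @ drop (Suc i) ts) (D (ts ! i))"

fun Pmaps :: "nat \<Rightarrow> (tree \<Rightarrow> tree list multiset) set" where
  "Pmaps 0 = {\<lambda>t. {#[t]#}}"
| "Pmaps (Suc n) = {(\<lambda>t. \<Sum>\<^sub># (image_mset (applyAt i D) (P t))) | P i D.
                      P \<in> Pmaps n \<and> i \<le> n \<and> D \<in> {rDelta_left, rDelta_right}}"

definition in_Aplus :: "(tree \<Rightarrow> 'k::field) \<Rightarrow> bool" where
  "in_Aplus a \<longleftrightarrow> finite {t. a t \<noteq> 0} \<and> (\<forall>t. a t \<noteq> 0 \<longrightarrow> wf_tree t \<and> t \<noteq> leaf)"

text \<open>Linear extension of a map given on basis trees; the result is the coefficient function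
  of the resulting element of the tensor power.\<close>
definition lin_ext :: "(tree \<Rightarrow> tree list multiset) \<Rightarrow> (tree \<Rightarrow> 'k::field) \<Rightarrow> tree list \<Rightarrow> 'k" where
  "lin_ext P a = (\<lambda>ts. \<Sum>t\<in>{t. a t \<noteq> 0}. a t * of_nat (count (P t) ts))"

end

theory Submission
  imports Defs
begin

text \<open>Count internal vertices. Each term a \<otimes> b of a reduced coproduct of a tree t has two
  factors different from the leaf, with at most as many internal vertices in total as t: a cut
  distributes the internal vertices of t between the trunk part and the cut-off trees, and the
  tridendriform product of the cut-off trees never creates internal vertices. Hence for
  P \<in> P(n) every tensor in P(t) has n+1 factors, each with an internal vertex, sharing at most
  the internal vertices of t; so P(t) = 0 once n is at least their number. The argument never
  uses that internal vertices have at least two children.\<close>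

lemma filter_product_lists:
  "filter (\<lambda>xs. \<forall>x\<in>set xs. P x) (product_lists xss) = product_lists (map (filter P) xss)"
proof (induction xss)
  case (Cons xs xss)
  have "filter (\<lambda>ys. \<forall>y\<in>set ys. P y) (map ((#) x) (product_lists xss))
      = (if P x then map ((#) x) (product_lists (map (filter P) xss)) else [])" for x
    using Cons.IH by (simp add: filter_map comp_def)
  moreover have "concat (map (\<lambda>x. if P x then f x else []) xs) = concat (map f (filter P xs))"
    for f :: "'a \<Rightarrow> 'a list list"
    by (induction xs) auto
  ultimately show ?case
    by (simp add: filter_concat comp_def)
qed simp

lemma sum_list_map_partition:
  fixes f :: "'a \<Rightarrow> 'b :: comm_monoid_add"
  shows "sum_list (map f xs) =
    sum_list (map f (filter P xs)) + sum_list (map f (filter (\<lambda>x. \<not> P x) xs))"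
  by (induction xs) (simp_all add: ac_simps)

fun internal_vertices :: "tree \<Rightarrow> nat" where
  "internal_vertices (Node ts) = (if ts = [] then 0 else Suc (sum_list (map internal_vertices ts)))"

lemma internal_vertices_pos: "t \<noteq> leaf \<Longrightarrow> 0 < internal_vertices t"
  by (cases t) auto

lemma leaf_in_star_iff: "leaf \<in># star x y \<longleftrightarrow> x = leaf \<and> y = leaf"
  by (induction x y rule: star.induct) auto

text \<open>Only an inequality: the middle product merges two root vertices.\<close>

lemma internal_vertices_star:
  "w \<in># star x y \<Longrightarrow> internal_vertices w \<le> internal_vertices x + internal_vertices y"
proof (induction x y arbitrary: w rule: star.induct)
  case (3 x xs y ys)
  obtain X z where X: "x # xs = X @ [z]"
    by (metis list.distinct(1) rev_exhaust)
  show ?case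
    using "3.prems"[unfolded star.simps(3)] "3.IH" unfolding X by fastforce
qed auto

lemma leaf_in_prodL_iff: "leaf \<in># prodL gs \<longleftrightarrow> (\<forall>g\<in>set gs. g = leaf)"
  by (induction gs) (auto simp: leaf_in_star_iff)

lemma internal_vertices_prodL:
  "g \<in># prodL gs \<Longrightarrow> internal_vertices g \<le> sum_list (map internal_vertices gs)"
proof (induction gs arbitrary: g)
  case (Cons h gs)
  then obtain g' where "g' \<in># prodL gs" "g \<in># star h g'" by auto
  with Cons.IH show ?case by (fastforce dest: internal_vertices_star)
qed simp

definition cut_bounded :: "tree \<Rightarrow> tree \<times> tree list \<times> bool \<Rightarrow> bool" where
  "cut_bounded t = (\<lambda>(p, gs, f).
     internal_vertices p + sum_list (map internal_vertices gs) \<le> internal_vertices t \<and>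
     (\<forall>g\<in>set gs. g \<noteq> leaf) \<and> (f \<longrightarrow> gs \<noteq> []))"

lemma cut_bounded_Node:
  assumes "list_all2 (\<lambda>c t. cut_bounded t c) cs ts"
  shows "cut_bounded (Node ts) (Node (map fst cs), concat (map (fst \<circ> snd) cs),
           (case rev cs of [] \<Rightarrow> False | c # _ \<Rightarrow> snd (snd c)))"
proof -
  have "sum_list (map (internal_vertices \<circ> fst) cs)
          + sum_list (map internal_vertices (concat (map (fst \<circ> snd) cs)))
        \<le> sum_list (map internal_vertices ts)
      \<and> (\<forall>g\<in>set (concat (map (fst \<circ> snd) cs)). g \<noteq> leaf)"
    using assms by (induction rule: list_all2_induct) (auto simp: cut_bounded_def)
  moreover have "concat (map (fst \<circ> snd) cs) \<noteq> []" if "cs \<noteq> []" "snd (snd (last cs))"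
    using assms that
    by (induction rule: list_all2_induct) (auto simp: cut_bounded_def split: if_splits)
  moreover have "length cs = length ts"
    using assms by (rule list_all2_lengthD)
  ultimately show ?thesis
    by (auto simp: cut_bounded_def rev_map comp_def split: list.split)
qed

lemma cutsNT_bounded: "c \<in> set (cutsNT t) \<Longrightarrow> cut_bounded t c"
proof (induction t arbitrary: c)
  case (Node ts)
  then obtain cs where cs: "cs \<in> set (product_lists
      (map (\<lambda>c. (if c = leaf then [] else [(leaf, [c], True)]) @ cutsNT c) ts))"
    and c: "c = (Node (map fst cs), concat (map (fst \<circ> snd) cs),
                 (case rev cs of [] \<Rightarrow> False | c # _ \<Rightarrow> snd (snd c)))"
    by auto
  have child: "cut_bounded t c"
    if "t \<in> set ts" "c \<in> set ((if t = leaf then [] else [(leaf, [t], True)]) @ cutsNT t)" for t c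
    using that Node.IH[OF that(1)] by (auto simp: cut_bounded_def split: if_splits)
  have "list_all2 (\<lambda>c t. cut_bounded t c) cs ts"
    using cs by (auto simp: product_lists_set list_all2_map2 list_all2_conv_all_nth intro: child)
  then show ?case
    unfolding c by (rule cut_bounded_Node)
qed

lemma fst_cutsNT_eq_leaf_iff: "c \<in> set (cutsNT t) \<Longrightarrow> fst c = leaf \<longleftrightarrow> t = leaf"
  by (cases t) (auto dest: in_set_product_lists_length)

lemma cutsNT_no_cut_off_trees: "filter (\<lambda>c. fst (snd c) = []) (cutsNT t) = [(t, [], False)]"
proof (induction t)
  case (Node ts)
  let ?Q = "\<lambda>c :: tree \<times> tree list \<times> bool. fst (snd c) = []"
  let ?opt = "\<lambda>c. (if c = leaf then [] else [(leaf, [c], True)]) @ cutsNT c"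
  define F where "F = (\<lambda>cs. (Node (map fst cs), concat (map (fst \<circ> snd) cs),
                (case rev cs of [] \<Rightarrow> False | c # _ \<Rightarrow> snd (snd (c :: tree \<times> tree list \<times> bool)))))"
  have "filter ?Q (cutsNT (Node ts)) =
      map F (filter (\<lambda>cs. \<forall>c\<in>set cs. ?Q c) (product_lists (map ?opt ts)))"
    by (simp add: F_def filter_map comp_def)
  also have "\<dots> = map F (product_lists (map (filter ?Q \<circ> ?opt) ts))"
    by (simp add: filter_product_lists)
  also have "map (filter ?Q \<circ> ?opt) ts = map (\<lambda>c. [(c, [], False)]) ts"
    using Node.IH by auto
  also have "product_lists (map (\<lambda>c. [(c, [], False)]) ts) = [map (\<lambda>c. (c, [], False)) ts]"
    by (induction ts) auto
  also have "map F [map (\<lambda>c. (c, [], False)) ts] = [(Node ts, [], False)]"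
    by (cases "rev ts") (simp_all add: F_def rev_map comp_def)
  finally show ?case .
qed

lemma star_leaf_right: "star t leaf = {#t#}"
  by (cases "(t, leaf)" rule: star.cases) auto

lemma cutsNT_term_bounded:
  assumes "(p, gs, f) \<in> set (cutsNT t)" "t \<noteq> leaf" "gs \<noteq> []" "g \<in># prodL gs"
  shows "g \<noteq> leaf \<and> p \<noteq> leaf \<and> internal_vertices g + internal_vertices p \<le> internal_vertices t"
  using cutsNT_bounded[OF assms(1)] fst_cutsNT_eq_leaf_iff[OF assms(1)] assms(2-4)
    internal_vertices_prodL[OF assms(4)] leaf_in_prodL_iff[of gs]
  by (cases gs) (auto simp: cut_bounded_def)

definition splits_internal_vertices :: "(tree \<Rightarrow> (tree \<times> tree) multiset) \<Rightarrow> bool" where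
  "splits_internal_vertices D \<longleftrightarrow> (\<forall>t a b. t \<noteq> leaf \<longrightarrow> (a, b) \<in># D t \<longrightarrow>
     a \<noteq> leaf \<and> b \<noteq> leaf \<and> internal_vertices a + internal_vertices b \<le> internal_vertices t)"

lemma splits_internal_vertices_rDelta_left: "splits_internal_vertices rDelta_left"
  unfolding splits_internal_vertices_def
proof (intro allI impI)
  fix t a b
  assume "t \<noteq> leaf" "(a, b) \<in># rDelta_left t"
  \<comment> \<open>the total cut heads \<open>cuts t\<close> and contributes exactly the subtracted term\<close>
  have "rDelta_left t = sum_list (map
      (\<lambda>(p, gs, f). if f then image_mset (\<lambda>g. (g, p)) (prodL gs) else {#}) (cutsNT t))"
    by (simp add: rDelta_left_def Delta_left_def cuts_def star_leaf_right)
  with \<open>(a, b) \<in># rDelta_left t\<close> obtain p gs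
    where cut: "(p, gs, True) \<in> set (cutsNT t)" and "a \<in># prodL gs" "b = p"
    by (auto split: if_splits)
  moreover have "gs \<noteq> []"
    using cutsNT_bounded[OF cut] by (simp add: cut_bounded_def)
  ultimately show
    "a \<noteq> leaf \<and> b \<noteq> leaf \<and> internal_vertices a + internal_vertices b \<le> internal_vertices t"
    using cutsNT_term_bounded \<open>t \<noteq> leaf\<close> by blast
qed

lemma splits_internal_vertices_rDelta_right: "splits_internal_vertices rDelta_right"
  unfolding splits_internal_vertices_def
proof (intro allI impI)
  fix t a b
  assume "t \<noteq> leaf" "(a, b) \<in># rDelta_right t"
  let ?term = "\<lambda>(p, gs, f). if f then {#} else image_mset (\<lambda>g. (g, p)) (prodL gs)"
  have "Delta_right t = sum_list (map ?term (cutsNT t))"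
    by (simp add: Delta_right_def cuts_def)
  also have "\<dots> = {#(leaf, t)#} +
      sum_list (map ?term (filter (\<lambda>c. fst (snd c) \<noteq> []) (cutsNT t)))"
    by (subst sum_list_map_partition[where P = "\<lambda>c. fst (snd c) = []"])
       (simp add: cutsNT_no_cut_off_trees)
  finally have
    "rDelta_right t = sum_list (map ?term (filter (\<lambda>c. fst (snd c) \<noteq> []) (cutsNT t)))"
    by (simp add: rDelta_right_def)
  with \<open>(a, b) \<in># rDelta_right t\<close> obtain p gs
    where "(p, gs, False) \<in> set (cutsNT t)" "gs \<noteq> []" "a \<in># prodL gs" "b = p"
    by (auto split: if_splits)
  with \<open>t \<noteq> leaf\<close> show
    "a \<noteq> leaf \<and> b \<noteq> leaf \<and> internal_vertices a + internal_vertices b \<le> internal_vertices t"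
    using cutsNT_term_bounded by blast
qed

lemma applyAt_bounded:
  assumes D: "splits_internal_vertices D"
    and us: "\<forall>u\<in>set us. u \<noteq> leaf" "i < length us"
    and ts: "ts \<in># applyAt i D us"
  shows "length ts = Suc (length us) \<and> (\<forall>s\<in>set ts. s \<noteq> leaf) \<and>
    sum_list (map internal_vertices ts) \<le> sum_list (map internal_vertices us)"
proof -
  obtain a b
    where ab: "(a, b) \<in># D (us ! i)" and ts: "ts = take i us @ [a, b] @ drop (Suc i) us"
    using ts by (auto simp: applyAt_def)
  have "us ! i \<noteq> leaf"
    using us by simp
  with D ab have split: "a \<noteq> leaf \<and> b \<noteq> leaf \<and>
      internal_vertices a + internal_vertices b \<le> internal_vertices (us ! i)"
    unfolding splits_internal_vertices_def by blast
  have "us = take i us @ us ! i # drop (Suc i) us"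
    using us(2) by (simp add: id_take_nth_drop)
  then have sum: "sum_list (map internal_vertices us) =
      sum_list (map internal_vertices (take i us)) + internal_vertices (us ! i) +
      sum_list (map internal_vertices (drop (Suc i) us))"
    by (metis add.assoc list.simps(9) map_append sum_list.Cons sum_list_append)
  have "set (take i us) \<subseteq> set us" "set (drop (Suc i) us) \<subseteq> set us"
    by (simp_all add: set_take_subset set_drop_subset)
  with split sum us ts show ?thesis
    by auto
qed

lemma Pmaps_bounded:
  assumes "P \<in> Pmaps n" "t \<noteq> leaf" "ts \<in># P t"
  shows "length ts = Suc n \<and> (\<forall>s\<in>set ts. s \<noteq> leaf) \<and>
    sum_list (map internal_vertices ts) \<le> internal_vertices t"
  using assms
proof (induction n arbitrary: P ts)
  case (Suc n)
  then obtain Q i D where "P = (\<lambda>t. \<Sum>\<^sub># (image_mset (applyAt i D) (Q t)))"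
    and Q: "Q \<in> Pmaps n" and i: "i \<le> n" and D: "D \<in> {rDelta_left, rDelta_right}"
    by auto
  then obtain us where us: "us \<in># Q t" and ts: "ts \<in># applyAt i D us"
    using Suc.prems(3) by auto
  have "splits_internal_vertices D"
    using D splits_internal_vertices_rDelta_left splits_internal_vertices_rDelta_right by blast
  have "length us = Suc n" "\<forall>u\<in>set us. u \<noteq> leaf"
      "sum_list (map internal_vertices us) \<le> internal_vertices t"
    using Suc.IH[OF Q Suc.prems(2) us] by auto
  with applyAt_bounded[OF \<open>splits_internal_vertices D\<close> _ _ ts] i show ?case
    by auto
qed simp

lemma length_le_sum_internal_vertices:
  "\<forall>s\<in>set ts. s \<noteq> leaf \<Longrightarrow> length ts \<le> sum_list (map internal_vertices ts)"
  by (induction ts) (auto dest: internal_vertices_pos)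

lemma Pmaps_eq_empty:
  assumes "P \<in> Pmaps n" "t \<noteq> leaf" "internal_vertices t \<le> n"
  shows "P t = {#}"
proof (rule ccontr)
  assume "P t \<noteq> {#}"
  then obtain ts where "ts \<in># P t"
    by blast
  then have "length ts = Suc n" "\<forall>s\<in>set ts. s \<noteq> leaf"
      "sum_list (map internal_vertices ts) \<le> internal_vertices t"
    using Pmaps_bounded[OF assms(1,2)] by auto
  with length_le_sum_internal_vertices[of ts] assms(3) show False
    by linarith
qed

theorem mainTheorem13:
  fixes a :: "tree \<Rightarrow> 'k::field"
  assumes "in_Aplus a"
  shows "\<exists>n. \<forall>P\<in>Pmaps n. lin_ext P a = (\<lambda>_. 0)"
proof -
  let ?S = "{t. a t \<noteq> 0}"
  let ?n = "\<Sum>s\<in>?S. internal_vertices s"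
  have "finite ?S" "\<forall>t\<in>?S. t \<noteq> leaf"
    using assms by (auto simp: in_Aplus_def)
  then have vanish: "P t = {#}" if "P \<in> Pmaps ?n" "t \<in> ?S" for P t
    using that by (intro Pmaps_eq_empty[OF that(1)]) (auto intro: member_le_sum)
  have "lin_ext P a = (\<lambda>_. 0)" if "P \<in> Pmaps ?n" for P
    unfolding lin_ext_def using vanish[OF that] by (intro ext sum.neutral) simp
  then show ?thesis
    by blast
qed

end
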